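(* Let $m\in\mathbb N$, let $r_1,t_1,\dots,r_m,t_m\in\mathbb N$ and let $\tau_1,\dots,\tau_m\in T_Q$ be pairwise distinct, such that each $r_i$ is a position of the trace $\emptyset^{t_i}\cdot\overline{\tau_i}\cdot\mathrm{Enum}_{-\tau_i}$. Let $A\subseteq\mathcal A^{\mathsf G}$, let $B=\{(\emptyset^{t_i}\cdot\overline{\tau_i}\cdot\mathrm{Enum}_{-\tau_i})^{(r_i)}: i\in[1,m]\}$ and $C=\{(a,b)\in A\times B: a\approx b\}$. Then every deduction tree for $\langle A,B\rangle$ has size at least $|C|+1$.
   Context: Fix $n\ge1$, atomic propositions $AP=\{\tilde p,\tilde q\}\cup P\cup Q$ with $P=\{p_1,\dots,p_n\}$, $Q=\{q_1,\dots,q_n\}$ (all distinct), $\Sigma=2^{AP}$; $\emptyset$ denotes the letter with no propositions. For $\sigma=w_0\cdots w_m$, $\sigma^{(j)}=w_j\cdots w_m$. Let $\alpha(n)=2^{n+1}(n+2)^2$, $T_P=\{\tau\in\Sigma:\tilde p\in\tau\subseteq P\cup\{\tilde p\}\}$, $T_Q=\{\tau\in\Sigma:\tilde q\in\tau\subseteq Q\cup\{\tilde q\}\}$, and for $\tau\in T_Q$ let $\overline\tau\in T_P$ satisfy $p_i\in\overline\tau$ iff $q_i\in\tau$. Fix a strict total order $\prec$ on $T_Q$; $\mathrm{Enum}$ is the unique word in $(\emptyset^{\alpha(n)}\cdot T_Q)^{2^n}\cdot\emptyset^{\alpha(n)}$ listing each element of $T_Q$ once in increasing $\prec$-order, and $\mathrm{Enum}_{-\tau}$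 is obtained by deleting the position of letter $\tau$ and the $\alpha(n)$ $\emptyset$-positions immediately preceding it. $\mathcal A=\{\emptyset^j\cdot\overline\tau\cdot\mathrm{Enum}:j\in\mathbb N,\tau\in T_Q\}$ and $\mathcal A^{\mathsf G}$ is the set of all suffixes $\sigma^{(j)}$ ($0\le j<|\sigma|$) of traces $\sigma\in\mathcal A$. For $a,b\in\Sigma^+$, $a\approx b$ iff there are $u\in\mathbb N$ and $\rho\in T_Q\cup T_P$ with both $a,b\in\emptyset^u\cdot\rho\cdot\emptyset^{\alpha(n)}\cdot\Sigma^*$. Proof system: for $A,B\subseteq\Sigma^+$, $A^{\mathsf X}=\{\sigma^{(1)}:\sigma\in A,|\sigma|\ge2\}$, $A^{\mathsf G}$ = all suffixes of traces in $A$, a future point for $A$ is $f:A\to\mathbb N$ with $f(\sigma)<|\sigma|$, $A^f=\{\sigma^{(f(\sigma))}:\sigma\in A\}$. For a literal $\alpha$ ($p$ or $\neg p$), write $A\models\alpha$ if $\alpha$ holds at position $0$ of every $\sigma\in A$ and $B\perp\alpha$ if it fails at position $0$ of every $\sigma\in B$. Rules on terms $\langle A,B\rangle$: Atomic: $\langle A,B\rangle$ if $A\models\alpha$, $B\perp\alpha$ for some literal $\alpha$; Or: $\langle A_1\uplus A_2,B\rangle$ from $\langle A_1,B\rangle,\langle A_2,B\rangle$; And: $\langle A,B_1\uplus B_2\rangle$ from $\langle A,B_1\rangle,\langle A,B_2\rangle$; Next: $\langle A,B\rangle$ from $\langle A^{\mathsf X},B^{\mathsf X}\rangle$ if $|A^{\mathsf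 X}|=|A|$; WeakNext: $\langle A,B\rangle$ from $\langle A^{\mathsf X},B^{\mathsf X}\rangle$ if $|B^{\mathsf X}|=|B|$; Future: $\langle A,B\rangle$ from $\langle A^f,B^{\mathsf G}\rangle$, $f$ a future point for $A$; Globally: $\langle A,B\rangle$ from $\langle A^{\mathsf G},B^f\rangle$, $f$ a future point for $B$ ($\uplus$ = disjoint union). A deduction tree for $\langle A,B\rangle$ is a finite tree of rule applications rooted at $\langle A,B\rangle$ with every hypothesis derived; its size is its number of rule applications. *)

theory Defs
  imports Main
begin

(* Atomic propositions: Pt = p~, Qt = q~, P i = p_i, Q i = q_i (only 1 <= i <= n are used) *)
datatype ap = Pt | Qt | P nat | Q nat

type_synonym letter = "ap set"
type_synonym trace = "letter list"   (* traces in Sigma^+ are nonempty lists *)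

definition APs :: "nat \<Rightarrow> ap set" where
  "APs n = {Pt, Qt} \<union> P ` {1..n} \<union> Q ` {1..n}"

definition alpha :: "nat \<Rightarrow> nat" where
  "alpha n = 2 ^ (n + 1) * (n + 2) ^ 2"

definition TP :: "nat \<Rightarrow> letter set" where
  "TP n = {\<tau>. Pt \<in> \<tau> \<and> \<tau> \<subseteq> insert Pt (P ` {1..n})}"

definition TQ :: "nat \<Rightarrow> letter set" where
  "TQ n = {\<tau>. Qt \<in> \<tau> \<and> \<tau> \<subseteq> insert Qt (Q ` {1..n})}"

definition bar :: "letter \<Rightarrow> letter" where
  "bar \<tau> = insert Pt {P i | i. Q i \<in> \<tau>}"

definition enum_list :: "nat \<Rightarrow> (letter \<times> letter) set \<Rightarrow> letter list" where
  "enum_list n lt = (THE xs. distinct xs \<and> set xs = TQ n \<and> sorted_wrt (\<lambda>x y. (x, y) \<in> lt) xs)"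

definition Enum :: "nat \<Rightarrow> (letter \<times> letter) set \<Rightarrow> trace" where
  "Enum n lt = concat (map (\<lambda>\<tau>. replicate (alpha n) {} @ [\<tau>]) (enum_list n lt))
               @ replicate (alpha n) {}"

definition Enum_minus :: "nat \<Rightarrow> (letter \<times> letter) set \<Rightarrow> letter \<Rightarrow> trace" where
  "Enum_minus n lt \<tau> =
     (let e = Enum n lt; k = (THE k. k < length e \<and> e ! k = \<tau>)
      in take (k - alpha n) e @ drop (k + 1) e)"

definition Acal :: "nat \<Rightarrow> (letter \<times> letter) set \<Rightarrow> trace set" where
  "Acal n lt = {replicate j {} @ [bar \<tau>] @ Enum n lt | j \<tau>. \<tau> \<in> TQ n}"

definition suffixes :: "trace set \<Rightarrow> trace set" where
  "suffixes A = {drop j \<sigma> | \<sigma> j. \<sigma> \<in> A \<and> j < length \<sigma>}"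

definition nexts :: "trace set \<Rightarrow> trace set" where
  "nexts A = {drop 1 \<sigma> | \<sigma>. \<sigma> \<in> A \<and> 2 \<le> length \<sigma>}"

definition future_set :: "(trace \<Rightarrow> nat) \<Rightarrow> trace set \<Rightarrow> trace set" where
  "future_set f A = (\<lambda>\<sigma>. drop (f \<sigma>) \<sigma>) ` A"

definition approx :: "nat \<Rightarrow> trace \<Rightarrow> trace \<Rightarrow> bool" where
  "approx n a b = (\<exists>u \<rho> s t. \<rho> \<in> TQ n \<union> TP n \<and>
      a = replicate u {} @ [\<rho>] @ replicate (alpha n) {} @ s \<and>
      b = replicate u {} @ [\<rho>] @ replicate (alpha n) {} @ t)"

datatype literal = Pos ap | Neg ap

fun lit_var :: "literal \<Rightarrow> ap" where
  "lit_var (Pos p) = p" | "lit_var (Neg p) = p"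

fun holds0 :: "literal \<Rightarrow> trace \<Rightarrow> bool" where
  "holds0 (Pos p) \<sigma> = (p \<in> hd \<sigma>)"
| "holds0 (Neg p) \<sigma> = (p \<notin> hd \<sigma>)"

(* ded n A B k : there is a deduction tree for <A,B> of size k (number of rule applications) *)
inductive ded :: "nat \<Rightarrow> trace set \<Rightarrow> trace set \<Rightarrow> nat \<Rightarrow> bool" for n where
  Atomic: "\<lbrakk> lit_var \<alpha> \<in> APs n; \<forall>\<sigma>\<in>A. holds0 \<alpha> \<sigma>; \<forall>\<sigma>\<in>B. \<not> holds0 \<alpha> \<sigma> \<rbrakk>
           \<Longrightarrow> ded n A B 1"
| Or: "\<lbrakk> ded n A1 B k1; ded n A2 B k2; A1 \<inter> A2 = {} \<rbrakk> \<Longrightarrow> ded n (A1 \<union> A2) B (k1 + k2 + 1)"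
| And: "\<lbrakk> ded n A B1 k1; ded n A B2 k2; B1 \<inter> B2 = {} \<rbrakk> \<Longrightarrow> ded n A (B1 \<union> B2) (k1 + k2 + 1)"
| Next: "\<lbrakk> ded n (nexts A) (nexts B) k; card (nexts A) = card A \<rbrakk> \<Longrightarrow> ded n A B (k + 1)"
| WeakNext: "\<lbrakk> ded n (nexts A) (nexts B) k; card (nexts B) = card B \<rbrakk> \<Longrightarrow> ded n A B (k + 1)"
| Future: "\<lbrakk> \<forall>\<sigma>\<in>A. f \<sigma> < length \<sigma>; ded n (future_set f A) (suffixes B) k \<rbrakk> \<Longrightarrow> ded n A B (k + 1)"
| Globally: "\<lbrakk> \<forall>\<sigma>\<in>B. f \<sigma> < length \<sigma>; ded n (suffixes A) (future_set f B) k \<rbrakk> \<Longrightarrow> ded n A B (k + 1)"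

end

theory Submission
  imports Defs
begin

text \<open>
  Fix a letter \<open>x\<close> of \<open>T\<^sub>Q\<close>. The suffix at offset \<open>c\<close> of the \<open>B\<close>-trace
  \<open>\<emptyset>\<^sup>j bar(x) Enum\<^sub>-\<^sub>x\<close> and the suffix at the same offset of the \<open>\<A>\<close>-trace
  \<open>\<emptyset>\<^sup>j bar(x) Enum\<close> agree up to the position of \<open>x\<close> in the latter; they are
  \<open>k\<close>-twins for \<open>x\<close> if at least \<open>k\<close> letters remain before that position. A suffix of
  an \<open>\<A>\<close>-trace is determined by its first nonempty letter and the position of that letter,
  so, \<open>A\<close> and \<open>B\<close> being disjoint, every pair of \<open>C\<close> is a pair of \<open>\<alpha>(n)\<close>-twins, and
  distinct pairs of \<open>C\<close> are twins for distinct letters.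

  A deduction tree of size \<open>k \<le> \<alpha>(n)\<close> for \<open>\<langle>A, B\<rangle>\<close> leaves fewer than \<open>k\<close> letters
  with \<open>k\<close>-twins in \<open>A \<times> B\<close>. Twins share their first letter, so no atomic rule applies;
  Or and And split the letters between the subtrees; Next keeps twins; after Globally a twin
  pair either survives or its \<open>B\<close>-side lands behind the gap, where it is a suffix of its
  \<open>A\<close>-side, contradicting disjointness. Future loses at most one letter: when it loses \<open>x\<close>,
  the future point lands in the tail of \<open>Enum\<close> behind \<open>x\<close>, a suffix of the \<open>B\<close>-side of
  every twin pair of an earlier letter. For larger trees, \<open>|C| \<le> |T\<^sub>Q| \<le> 2\<^sup>n\<^sup>+\<^sup>1 < \<alpha>(n)\<close>.
\<close>

lemma sorted_wrt_insert_ex: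
  assumes "trans r" and "total_on S r"
  shows "sorted_wrt (\<lambda>x y. (x, y) \<in> r) xs \<Longrightarrow> distinct xs \<Longrightarrow> set xs \<subseteq> S \<Longrightarrow> x \<in> S \<Longrightarrow>
    x \<notin> set xs \<Longrightarrow> \<exists>ys. distinct ys \<and> set ys = insert x (set xs) \<and> sorted_wrt (\<lambda>x y. (x, y) \<in> r) ys"
proof (induction xs)
  case Nil
  then show ?case by (intro exI[of _ "[x]"]) auto
next
  case (Cons y xs)
  show ?case
  proof (cases "(x, y) \<in> r")
    case True
    with Cons.prems assms(1) show ?thesis
      by (intro exI[of _ "x # y # xs"]) (auto dest: transD)
  next
    case False
    with Cons.prems assms(2) have "(y, x) \<in> r"
      by (auto simp: total_on_def)
    obtain ys where "distinct ys" "set ys = insert x (set xs)" "sorted_wrt (\<lambda>x y. (x, y) \<in> r) ys"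
      using Cons by auto
    with Cons.prems \<open>(y, x) \<in> r\<close> show ?thesis
      by (intro exI[of _ "y # ys"]) auto
  qed
qed

lemma finite_sorted_wrt_list_ex:
  assumes "trans r" and "total_on S r" and "finite S"
  shows "\<exists>xs. distinct xs \<and> set xs = S \<and> sorted_wrt (\<lambda>x y. (x, y) \<in> r) xs"
proof -
  have "F \<subseteq> S \<Longrightarrow> \<exists>xs. distinct xs \<and> set xs = F \<and> sorted_wrt (\<lambda>x y. (x, y) \<in> r) xs"
    if "finite F" for F
    using that
  proof (induction F rule: finite_induct)
    case empty
    then show ?case by simp
  next
    case (insert x F)
    then obtain xs where "distinct xs" "set xs = F" "sorted_wrt (\<lambda>x y. (x, y) \<in> r) xs"
      by auto
    with insert show ?case
      using sorted_wrt_insert_ex[OF assms(1,2), of xs x] by auto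
  qed
  with assms(3) show ?thesis by blast
qed

lemma sorted_wrt_set_unique:
  assumes "irrefl r" and "trans r"
  shows "sorted_wrt (\<lambda>x y. (x, y) \<in> r) xs \<Longrightarrow> sorted_wrt (\<lambda>x y. (x, y) \<in> r) ys \<Longrightarrow>
    distinct xs \<Longrightarrow> distinct ys \<Longrightarrow> set xs = set ys \<Longrightarrow> xs = ys"
proof (induction xs arbitrary: ys)
  case Nil
  then show ?case by simp
next
  case (Cons x xs)
  then obtain y ys' where ys: "ys = y # ys'"
    by (cases ys) auto
  have "x = y"
  proof (rule ccontr)
    assume "x \<noteq> y"
    with Cons.prems ys have "(x, y) \<in> r" "(y, x) \<in> r"
      by auto
    with assms show False
      by (meson irrefl_def transD)
  qed
  moreover have "set xs = set ys'"
    using Cons.prems ys \<open>x = y\<close> by auto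
  ultimately show ?case
    using Cons ys by auto
qed

lemma length_concat_blocks:
  "length (concat (map (\<lambda>y. replicate a z @ [y]) ys)) = length ys * Suc a"
  by (induction ys) auto

lemma nth_concat_blocks:
  "e < length ys * Suc a \<Longrightarrow> concat (map (\<lambda>y. replicate a z @ [y]) ys) ! e
     = (if e mod Suc a = a then ys ! (e div Suc a) else z)"
proof (induction ys arbitrary: e)
  case Nil
  then show ?case by simp
next
  case (Cons y ys)
  show ?case
  proof (cases "e < Suc a")
    case True
    then show ?thesis by (auto simp: nth_append)
  next
    case False
    with Cons.prems Cons.IH[of "e - Suc a"] show ?thesis
      by (auto simp: nth_append le_mod_geq le_div_geq)
  qed
qed

lemma last_concat_blocks:
  "ys \<noteq> [] \<Longrightarrow> last (concat (map (\<lambda>y. replicate a z @ [y]) ys)) = last ys"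
  by (induction ys) auto

lemma concat_blocks_append_replicate:
  "\<exists>R. concat (map (\<lambda>y. replicate a z @ [y]) ys) @ replicate a z = replicate a z @ R"
  by (cases ys) auto

lemma replicate_append_Cons_inject:
  assumes "replicate u z @ y # s = replicate u' z @ y' # s'" and "y \<noteq> z" and "y' \<noteq> z"
  shows "u = u' \<and> y = y' \<and> s = s'"
proof -
  have "u = u'"
  proof (rule ccontr)
    assume "u \<noteq> u'"
    with assms(2,3) have "(replicate u z @ y # s) ! min u u' \<noteq> (replicate u' z @ y' # s') ! min u u'"
      by (auto simp: nth_append min_def)
    with assms(1) show False by simp
  qed
  with assms(1) show ?thesis by simp
qed

lemma append_eq_replicate_ConsD:
  assumes "xs @ ys = replicate u z @ y # zs" and "w \<in> set xs" and "w \<noteq> z"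
  shows "xs = replicate u z @ y # drop (Suc u) xs"
proof -
  have "u < length xs"
  proof (rule ccontr)
    assume "\<not> u < length xs"
    with arg_cong[OF assms(1), of "take (length xs)"] have "xs = replicate (length xs) z"
      by simp
    with assms(2,3) show False
      by (metis in_set_replicate)
  qed
  with arg_cong[OF assms(1), of "take (Suc u)"] have "take (Suc u) xs = replicate u z @ [y]"
    by simp
  then show ?thesis
    by (metis append_take_drop_id append.assoc append_Cons append_Nil)
qed

section \<open>Deduction trees\<close>

lemma ded_size_pos: "ded n A B k \<Longrightarrow> 1 \<le> k"
  by (induction rule: ded.induct) auto

lemma suffixesI: "\<sigma> \<in> A \<Longrightarrow> j < length \<sigma> \<Longrightarrow> drop j \<sigma> \<in> suffixes A"
  unfolding suffixes_def by auto

lemma nextsI: "\<sigma> \<in> A \<Longrightarrow> 2 \<le> length \<sigma> \<Longrightarrow> drop 1 \<sigma> \<in> nexts A"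
  unfolding nexts_def by auto

lemma future_setI: "\<sigma> \<in> A \<Longrightarrow> drop (f \<sigma>) \<sigma> \<in> future_set f A"
  unfolding future_set_def by auto

lemma nexts_eq_image: "nexts A = drop 1 ` {\<sigma> \<in> A. 2 \<le> length \<sigma>}"
  unfolding nexts_def by auto

lemma finite_suffixes:
  assumes "finite A"
  shows "finite (suffixes A)"
proof -
  have "suffixes A = (\<Union>\<sigma>\<in>A. (\<lambda>j. drop j \<sigma>) ` {..<length \<sigma>})"
    unfolding suffixes_def by auto
  with assms show ?thesis by simp
qed

lemma finite_nexts: "finite A \<Longrightarrow> finite (nexts A)"
  unfolding nexts_eq_image by simp

lemma finite_future_set: "finite A \<Longrightarrow> finite (future_set f A)"
  unfolding future_set_def by simp

lemma card_nexts_less: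
  assumes "finite A" and "\<sigma> \<in> A" and "length \<sigma> < 2"
  shows "card (nexts A) < card A"
proof -
  have "nexts A \<subseteq> drop 1 ` (A - {\<sigma>})"
    unfolding nexts_eq_image using assms(3) by auto
  with assms(1) have "card (nexts A) \<le> card (A - {\<sigma>})"
    by (meson card_image_le card_mono finite_Diff finite_imageI le_trans)
  also have "\<dots> < card A"
    using assms(1,2) by (rule card_Diff1_less)
  finally show ?thesis .
qed

lemma disjoint_if_nexts_disjoint:
  assumes "finite A" and "finite B" and "nexts A \<inter> nexts B = {}"
    and "card (nexts A) = card A \<or> card (nexts B) = card B"
  shows "A \<inter> B = {}"
proof (rule ccontr)
  assume "A \<inter> B \<noteq> {}"
  then obtain \<sigma> where \<sigma>: "\<sigma> \<in> A" "\<sigma> \<in> B" by blast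
  show False
  proof (cases "2 \<le> length \<sigma>")
    case True
    with \<sigma> assms(3) show False
      using nextsI by blast
  next
    case False
    with \<sigma> assms(1,2,4) show False
      using card_nexts_less[of A \<sigma>] card_nexts_less[of B \<sigma>] by auto
  qed
qed

lemma disjoint_if_future_disjoint:
  assumes "\<forall>\<sigma>\<in>A. f \<sigma> < length \<sigma>" and "future_set f A \<inter> suffixes B = {}"
  shows "A \<inter> B = {}"
proof (rule ccontr)
  assume "A \<inter> B \<noteq> {}"
  then obtain \<sigma> where "\<sigma> \<in> A" "\<sigma> \<in> B" by blast
  with assms(1) have "drop (f \<sigma>) \<sigma> \<in> future_set f A \<inter> suffixes B"
    by (simp add: future_setI suffixesI)
  with assms(2) show False by simp
qed

lemma ded_disjoint: "ded n A B k \<Longrightarrow> finite A \<Longrightarrow> finite B \<Longrightarrow> A \<inter> B = {}"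
proof (induction rule: ded.induct)
  case (Atomic \<alpha> A B)
  then show ?case by auto
next
  case (Or A1 B k1 A2 k2)
  then show ?case by auto
next
  case (And A B1 k1 B2 k2)
  then show ?case by auto
next
  case (Next A B k)
  then show ?case
    by (metis disjoint_if_nexts_disjoint finite_nexts)
next
  case (WeakNext A B k)
  then show ?case
    by (metis disjoint_if_nexts_disjoint finite_nexts)
next
  case (Future A f B k)
  then show ?case
    by (metis disjoint_if_future_disjoint finite_future_set finite_suffixes)
next
  case (Globally B f A k)
  then show ?case
    by (metis disjoint_if_future_disjoint finite_future_set finite_suffixes Int_commute)
qed

section \<open>The enumeration trace\<close>

lemma finite_TQ: "finite (TQ n)"
proof -
  have "TQ n \<subseteq> Pow (insert Qt (Q ` {1..n}))"
    unfolding TQ_def by auto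
  then show ?thesis
    by (rule finite_subset) simp
qed

lemma card_TQ_le: "card (TQ n) \<le> 2 ^ Suc n"
proof -
  have "TQ n \<subseteq> Pow (insert Qt (Q ` {1..n}))"
    unfolding TQ_def by auto
  then have "card (TQ n) \<le> 2 ^ card (insert Qt (Q ` {1..n}))"
    by (metis card_Pow card_mono finite_Pow_iff finite_atLeastAtMost finite_imageI finite_insert)
  also have "\<dots> \<le> 2 ^ Suc n"
    using card_image_le[of "{1..n}" Q] by (intro power_increasing) (auto simp: card_insert_if)
  finally show ?thesis .
qed

lemma TQ_TP_nonempty: "\<rho> \<in> TQ n \<union> TP n \<Longrightarrow> \<rho> \<noteq> {}"
  unfolding TQ_def TP_def by auto

lemma Pt_notin_TQ: "\<rho> \<in> TQ n \<Longrightarrow> Pt \<notin> \<rho>"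
  unfolding TQ_def by auto

lemma Pt_in_bar: "Pt \<in> bar \<tau>"
  unfolding bar_def by simp

lemma two_pow_less_alpha: "2 ^ Suc n < alpha n"
  unfolding alpha_def by (simp add: power2_eq_square)

locale enumeration =
  fixes n :: nat and lt :: "(letter \<times> letter) set"
  assumes strict_linear_order: "strict_linear_order_on (TQ n) lt"
begin

abbreviation letters :: "letter list" where
  "letters \<equiv> enum_list n lt"

abbreviation E :: trace where
  "E \<equiv> Enum n lt"

lemma
  shows distinct_letters: "distinct letters" and set_letters: "set letters = TQ n"
proof -
  have "irrefl lt" "trans lt" "total_on (TQ n) lt"
    using strict_linear_order by (auto simp: strict_linear_order_on_def)
  obtain xs where xs: "distinct xs" "set xs = TQ n" "sorted_wrt (\<lambda>x y. (x, y) \<in> lt) xs"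
    using finite_sorted_wrt_list_ex[OF \<open>trans lt\<close> \<open>total_on (TQ n) lt\<close> finite_TQ] by blast
  have "letters = xs"
    unfolding enum_list_def
    by (rule the_equality) (use xs sorted_wrt_set_unique[OF \<open>irrefl lt\<close> \<open>trans lt\<close>] in auto)
  with xs show "distinct letters" "set letters = TQ n" by simp_all
qed

lemma TQ_nonempty: "x \<in> TQ n \<Longrightarrow> x \<noteq> {}"
  using TQ_TP_nonempty by blast

lemma length_Enum: "length E = length letters * Suc (alpha n) + alpha n"
  unfolding Enum_def by (simp add: length_concat_blocks)

lemma nth_Enum:
  "e < length E \<Longrightarrow> E ! e = (if e < length letters * Suc (alpha n) \<and> e mod Suc (alpha n) = alpha n
     then letters ! (e div Suc (alpha n)) else {})"
  unfolding Enum_def by (auto simp: nth_append length_concat_blocks nth_concat_blocks)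

lemma nth_Enum_block:
  assumes "q < length letters"
  shows "q * Suc (alpha n) + alpha n < length E \<and> E ! (q * Suc (alpha n) + alpha n) = letters ! q"
proof -
  have "Suc q * Suc (alpha n) \<le> length letters * Suc (alpha n)"
    using assms by (intro mult_right_mono) auto
  moreover have "(q * Suc (alpha n) + alpha n) mod Suc (alpha n) = alpha n"
    unfolding mod_mult_self3 by simp
  moreover have "(q * Suc (alpha n) + alpha n) div Suc (alpha n) = q"
    using div_mult_self3[of "Suc (alpha n)" q "alpha n"] by simp
  ultimately show ?thesis
    using nth_Enum[of "q * Suc (alpha n) + alpha n"] length_Enum by simp
qed

lemma nth_Enum_nonempty:
  assumes "e < length E" and "E ! e \<noteq> {}"
  obtains q where "q < length letters" "e = q * Suc (alpha n) + alpha n" "E ! e = letters ! q"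
proof
  have e: "e < length letters * Suc (alpha n)" "e mod Suc (alpha n) = alpha n"
    "E ! e = letters ! (e div Suc (alpha n))"
    using assms nth_Enum by (auto split: if_splits)
  then show "e div Suc (alpha n) < length letters"
    by (simp add: less_mult_imp_div_less)
  show "e = e div Suc (alpha n) * Suc (alpha n) + alpha n"
    using e(2) div_mult_mod_eq[of e "Suc (alpha n)"] by simp
  show "E ! e = letters ! (e div Suc (alpha n))"
    by (fact e(3))
qed

definition slot :: "letter \<Rightarrow> nat" where
  "slot x = (THE e. e < length E \<and> E ! e = x)"

lemma slot_nth_letters:
  assumes "q < length letters"
  shows "slot (letters ! q) = q * Suc (alpha n) + alpha n"
  unfolding slot_def
proof (rule the_equality)
  show "q * Suc (alpha n) + alpha n < length E \<and> E ! (q * Suc (alpha n) + alpha n) = letters ! q"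
    using nth_Enum_block[OF assms] .
next
  fix e
  assume e: "e < length E \<and> E ! e = letters ! q"
  have "letters ! q \<noteq> {}"
    using assms set_letters TQ_nonempty nth_mem by metis
  with e obtain q' where "q' < length letters" "e = q' * Suc (alpha n) + alpha n" "letters ! q' = letters ! q"
    using nth_Enum_nonempty by metis
  with assms distinct_letters show "e = q * Suc (alpha n) + alpha n"
    by (simp add: nth_eq_iff_index_eq)
qed

lemma slot_nth_Enum:
  assumes "e < length E" and "E ! e \<noteq> {}"
  shows "E ! e \<in> TQ n" and "slot (E ! e) = e"
proof -
  obtain q where "q < length letters" "e = q * Suc (alpha n) + alpha n" "E ! e = letters ! q"
    using nth_Enum_nonempty[OF assms] .
  then show "E ! e \<in> TQ n" "slot (E ! e) = e"
    using set_letters slot_nth_letters by auto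
qed

lemma Enum_split:
  assumes "x \<in> TQ n"
  obtains P R where "E = P @ replicate (alpha n) {} @ x # replicate (alpha n) {} @ R"
    and "slot x = length P + alpha n" and "P = [] \<or> last P \<noteq> {}"
proof -
  obtain q where q: "q < length letters" "letters ! q = x"
    using assms set_letters by (metis in_set_conv_nth)
  define blocks :: "letter list \<Rightarrow> trace" where
    "blocks ys = concat (map (\<lambda>y. replicate (alpha n) {} @ [y]) ys)" for ys
  define P where "P = blocks (take q letters)"
  obtain R where R: "blocks (drop (Suc q) letters) @ replicate (alpha n) {} = replicate (alpha n) {} @ R"
    using concat_blocks_append_replicate[of "alpha n" "{}" "drop (Suc q) letters"]
    unfolding blocks_def by blast
  have "take q letters @ x # drop (Suc q) letters = letters"
    using id_take_nth_drop[OF q(1)] q(2) by simp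
  then have "E = blocks (take q letters @ x # drop (Suc q) letters) @ replicate (alpha n) {}"
    unfolding Enum_def blocks_def by (simp only:)
  then have "E = P @ replicate (alpha n) {} @ x # replicate (alpha n) {} @ R"
    using R unfolding P_def blocks_def by simp
  moreover have "slot x = length P + alpha n"
    using slot_nth_letters[OF q(1)] q unfolding P_def blocks_def by (simp add: length_concat_blocks)
  moreover have "P = [] \<or> last P \<noteq> {}"
  proof (cases q)
    case (Suc q')
    then have "last P = letters ! q'"
      using q(1) unfolding P_def blocks_def by (simp add: last_concat_blocks take_Suc_conv_app_nth)
    then show ?thesis
      using Suc q(1) set_letters TQ_nonempty nth_mem by (metis Suc_lessD)
  qed (simp add: P_def blocks_def)
  ultimately show ?thesis
    using that by blast
qed

lemma nth_Enum_slot: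
  assumes "x \<in> TQ n"
  shows "slot x < length E" and "E ! slot x = x"
proof -
  obtain P R where "E = P @ replicate (alpha n) {} @ x # replicate (alpha n) {} @ R"
    and "slot x = length P + alpha n"
    using Enum_split[OF assms] by blast
  then show "slot x < length E" "E ! slot x = x"
    by (simp_all add: nth_append)
qed

lemma slot_inj: "x \<in> TQ n \<Longrightarrow> y \<in> TQ n \<Longrightarrow> slot x = slot y \<Longrightarrow> x = y"
  by (metis nth_Enum_slot(2))

lemma alpha_le_slot: "x \<in> TQ n \<Longrightarrow> alpha n \<le> slot x"
  by (metis Enum_split le_add2)

lemma slot_gap:
  assumes "x \<in> TQ n" and "y \<in> TQ n" and "slot x < slot y"
  shows "slot x + alpha n < slot y"
proof (rule ccontr)
  assume "\<not> slot x + alpha n < slot y"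
  obtain P R where E: "E = P @ replicate (alpha n) {} @ x # replicate (alpha n) {} @ R"
    and "slot x = length P + alpha n"
    using Enum_split[OF assms(1)] by blast
  with assms(3) \<open>\<not> slot x + alpha n < slot y\<close> have "E ! slot y = {}"
    by (simp add: nth_append)
  with assms(2) show False
    using nth_Enum_slot(2) TQ_nonempty by metis
qed

lemma Enum_minus_eq: "Enum_minus n lt x = take (slot x - alpha n) E @ drop (Suc (slot x)) E"
  unfolding Enum_minus_def Let_def slot_def by simp

section \<open>Twin pairs\<close>

definition enum_trace :: "nat \<Rightarrow> letter \<Rightarrow> trace" where
  "enum_trace j x = replicate j {} @ bar x # E"

definition gap_trace :: "nat \<Rightarrow> letter \<Rightarrow> trace" where
  "gap_trace j x = replicate j {} @ bar x # Enum_minus n lt x"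

definition divergence :: "nat \<Rightarrow> letter \<Rightarrow> nat" where
  "divergence j x = Suc (j + slot x)"

lemma trace_split:
  assumes "x \<in> TQ n"
  obtains U R where "enum_trace j x = U @ replicate (alpha n) {} @ x # replicate (alpha n) {} @ R"
    and "gap_trace j x = U @ replicate (alpha n) {} @ R"
    and "replicate (alpha n) {} @ R = drop (Suc (slot x)) E"
    and "divergence j x = length U + alpha n"
    and "U \<noteq> []" and "last U \<noteq> {}"
proof -
  obtain P R where E: "E = P @ replicate (alpha n) {} @ x # replicate (alpha n) {} @ R"
    and slot: "slot x = length P + alpha n" and last: "P = [] \<or> last P \<noteq> {}"
    using Enum_split[OF assms] by blast
  have "Enum_minus n lt x = P @ replicate (alpha n) {} @ R"
    unfolding Enum_minus_eq slot using E by simp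
  moreover have "last (replicate j {} @ bar x # P) \<noteq> {}"
    using last Pt_in_bar by (cases "P = []") auto
  ultimately show ?thesis
  proof (intro that[of "replicate j {} @ bar x # P" R])
    show "enum_trace j x = (replicate j {} @ bar x # P) @ replicate (alpha n) {} @ x # replicate (alpha n) {} @ R"
      unfolding enum_trace_def by (subst E) simp
    show "replicate (alpha n) {} @ R = drop (Suc (slot x)) E"
      unfolding slot by (subst E) simp
    show "divergence j x = length (replicate j {} @ bar x # P) + alpha n"
      unfolding divergence_def slot by simp
  qed (simp_all add: gap_trace_def)
qed

lemma drop_enum_trace: "j < q \<Longrightarrow> drop q (enum_trace j x) = drop (q - Suc j) E"
  unfolding enum_trace_def by (simp add: drop_Cons')

lemma drop_gap_trace:
  assumes "x \<in> TQ n" and "divergence j x \<le> q + alpha n"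
  shows "drop q (gap_trace j x) = drop (q + Suc (alpha n)) (enum_trace j x)"
proof -
  obtain U R where enum: "enum_trace j x = U @ replicate (alpha n) {} @ x # replicate (alpha n) {} @ R"
    and gap: "gap_trace j x = U @ replicate (alpha n) {} @ R" and div: "divergence j x = length U + alpha n"
    using trace_split[OF assms(1)] by blast
  define d where "d = q - length U"
  have q: "q = length U + d" and q': "q + Suc (alpha n) = length U + (Suc (alpha n) + d)"
    using assms(2) div unfolding d_def by linarith+
  have "drop (Suc (alpha n) + d) (replicate (alpha n) {} @ x # Y) = drop d Y" for Y :: trace
    by simp
  then show ?thesis
    unfolding enum gap q' by (subst q) simp
qed

lemma drop_Enum_eq_drop_gap_trace:
  assumes "x \<in> TQ n" and "slot x < e"
  shows "drop e E = drop (j + e - alpha n) (gap_trace j x)"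
proof -
  obtain U R where gap: "gap_trace j x = U @ replicate (alpha n) {} @ R"
    and R: "replicate (alpha n) {} @ R = drop (Suc (slot x)) E"
    and div: "divergence j x = length U + alpha n"
    using trace_split[OF assms(1)] by blast
  have "drop e E = drop (e - Suc (slot x)) (replicate (alpha n) {} @ R)"
    using assms(2) unfolding R by simp
  also have "\<dots> = drop (length U + (e - Suc (slot x))) (gap_trace j x)"
    unfolding gap by simp
  also have "length U + (e - Suc (slot x)) = j + e - alpha n"
    using assms(2) div unfolding divergence_def by linarith
  finally show ?thesis .
qed

definition twins :: "nat \<Rightarrow> letter \<Rightarrow> trace \<Rightarrow> trace \<Rightarrow> bool" where
  "twins k x a b \<longleftrightarrow> x \<in> TQ n \<and>
     (\<exists>j c. a = drop c (enum_trace j x) \<and> b = drop c (gap_trace j x) \<and> c + k \<le> divergence j x)"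

lemma twinsE:
  assumes "twins k x a b"
  obtains j c where "x \<in> TQ n" "a = drop c (enum_trace j x)" "b = drop c (gap_trace j x)"
    "c + k \<le> divergence j x"
  using assms unfolding twins_def by blast

lemma twins_mono: "twins k x a b \<Longrightarrow> k' \<le> k \<Longrightarrow> twins k' x a b"
  unfolding twins_def by fastforce

lemma twins_drop:
  assumes "twins (d + k) x a b"
  shows "twins k x (drop d a) (drop d b)"
proof -
  obtain j c where "x \<in> TQ n" "a = drop c (enum_trace j x)" "b = drop c (gap_trace j x)"
    "c + (d + k) \<le> divergence j x"
    using assms by (rule twinsE)
  then show ?thesis
    unfolding twins_def by (intro conjI exI[of _ j] exI[of _ "c + d"]) (simp_all add: add.commute)
qed

lemma twins_take:
  assumes "twins k x a b"
  shows "take k a = take k b" and "k \<le> length b" and "length b < length a"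
proof -
  obtain j c where x: "x \<in> TQ n" and ab: "a = drop c (enum_trace j x)" "b = drop c (gap_trace j x)"
    and c: "c + k \<le> divergence j x"
    using assms by (rule twinsE)
  obtain U R where enum: "enum_trace j x = U @ replicate (alpha n) {} @ x # replicate (alpha n) {} @ R"
    and gap: "gap_trace j x = U @ replicate (alpha n) {} @ R" and div: "divergence j x = length U + alpha n"
    using trace_split[OF x] by blast
  have "take (k + c) (enum_trace j x) = take (k + c) (gap_trace j x)"
    using c div unfolding enum gap by simp
  then show "take k a = take k b"
    unfolding ab take_drop by simp
  show "k \<le> length b" "length b < length a"
    using c div unfolding ab enum gap by simp_all
qed

lemma twins_hd:
  assumes "twins k x a b" and "1 \<le> k"
  shows "a \<noteq> [] \<and> b \<noteq> [] \<and> hd a = hd b"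
proof -
  have "twins 1 x a b"
    using assms by (rule twins_mono)
  then have "take 1 a = take 1 b" "1 \<le> length b" "length b < length a"
    by (rule twins_take)+
  then show ?thesis
    by (cases a; cases b) auto
qed

lemma twins_next:
  assumes "twins (Suc k) x a b" and "1 \<le> k"
  shows "2 \<le> length a" and "2 \<le> length b" and "twins k x (drop 1 a) (drop 1 b)"
  using twins_take(2,3)[OF assms(1)] twins_drop[of 1 k x a b] assms by simp_all

lemma twins_globally_cases:
  assumes "twins (Suc k) x a b" and "y < length b" and "k \<le> alpha n"
  shows "y < length a \<and> twins k x (drop y a) (drop y b) \<or> (\<exists>y'<length a. drop y b = drop y' a)"
proof -
  obtain j c where x: "x \<in> TQ n" and ab: "a = drop c (enum_trace j x)" "b = drop c (gap_trace j x)"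
    and c: "c + Suc k \<le> divergence j x"
    using assms(1) by (rule twinsE)
  show ?thesis
  proof (cases "c + y + k \<le> divergence j x")
    case True
    then have "twins k x (drop y a) (drop y b)"
      using x unfolding ab twins_def by (intro conjI exI[of _ j] exI[of _ "c + y"]) (simp_all add: add.commute)
    moreover have "y < length a"
      using assms(2) twins_take(3)[OF assms(1)] by simp
    ultimately show ?thesis by blast
  next
    case False
    then have "drop y b = drop (y + Suc (alpha n)) a"
      using drop_gap_trace[OF x, of j "c + y"] assms(3) unfolding ab by (simp add: add.commute add.left_commute)
    moreover have "drop y b \<noteq> []"
      using assms(2) by simp
    ultimately show ?thesis
      by (metis drop_eq_Nil not_le_imp_less)
  qed
qed

lemma twins_future_cases:
  assumes "twins (Suc k) x a b" and "y < length a" and "1 \<le> k" and "k \<le> alpha n"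
  shows "y < length b \<and> twins k x (drop y a) (drop y b) \<or> (\<exists>e<length E. drop y a = drop e E \<and> slot x < e + k)"
proof -
  obtain j c where x: "x \<in> TQ n" and ab: "a = drop c (enum_trace j x)" "b = drop c (gap_trace j x)"
    and c: "c + Suc k \<le> divergence j x"
    using assms(1) by (rule twinsE)
  show ?thesis
  proof (cases "c + y + k \<le> divergence j x")
    case True
    then have twin: "twins k x (drop y a) (drop y b)"
      using x unfolding ab twins_def by (intro conjI exI[of _ j] exI[of _ "c + y"]) (simp_all add: add.commute)
    moreover have "y < length b"
      using twins_take(2)[OF twin] assms(3) by simp
    ultimately show ?thesis by blast
  next
    case False
    define e where "e = c + y - Suc j"
    have "j < c + y" and e_k: "slot x < e + k"
      using False alpha_le_slot[OF x] assms(4) unfolding e_def divergence_def by linarith+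
    then have "drop y a = drop e E"
      unfolding ab e_def by (simp add: drop_enum_trace add.commute)
    moreover have "e < length E"
      using assms(2) \<open>drop y a = drop e E\<close> by (metis drop_eq_Nil leI length_drop zero_less_diff)
    ultimately show ?thesis
      using e_k by blast
  qed
qed

lemma Enum_suffix_of_twin:
  assumes "twins k x a b" and "slot x < e" and "slot x + alpha n < e + k" and "e < length E"
  obtains z where "z < length b" and "drop e E = drop z b"
proof -
  obtain j c where x: "x \<in> TQ n" and b: "b = drop c (gap_trace j x)" and c: "c + k \<le> divergence j x"
    using assms(1) by (rule twinsE)
  define p where "p = j + e - alpha n"
  have E_eq: "drop e E = drop p (gap_trace j x)"
    unfolding p_def using drop_Enum_eq_drop_gap_trace[OF x assms(2)] .
  have "c \<le> p"
    using c assms(3) unfolding p_def divergence_def by linarith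
  then have "drop e E = drop (p - c) b"
    unfolding E_eq b by simp
  moreover have "p - c < length b"
    using assms(4) \<open>drop e E = drop (p - c) b\<close> by (metis drop_eq_Nil leI length_drop zero_less_diff)
  ultimately show ?thesis
    using that by blast
qed

section \<open>Twin letters along a deduction tree\<close>

definition twin_letters :: "nat \<Rightarrow> trace set \<Rightarrow> trace set \<Rightarrow> letter set" where
  "twin_letters k A B = {x. \<exists>a\<in>A. \<exists>b\<in>B. twins k x a b}"

lemma twin_letters_subset_TQ: "twin_letters k A B \<subseteq> TQ n"
  unfolding twin_letters_def twins_def by blast

lemma finite_twin_letters: "finite (twin_letters k A B)"
  using twin_letters_subset_TQ finite_TQ by (rule finite_subset)

lemma twin_letters_antimono: "k' \<le> k \<Longrightarrow> twin_letters k A B \<subseteq> twin_letters k' A B"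
  unfolding twin_letters_def using twins_mono by blast

lemma twin_letters_Un_left: "twin_letters k (A1 \<union> A2) B = twin_letters k A1 B \<union> twin_letters k A2 B"
  unfolding twin_letters_def by blast

lemma twin_letters_Un_right: "twin_letters k A (B1 \<union> B2) = twin_letters k A B1 \<union> twin_letters k A B2"
  unfolding twin_letters_def by blast

lemma card_twin_letters_Un_left_le:
  assumes "k1 \<le> k" and "k2 \<le> k"
  shows "card (twin_letters k (A1 \<union> A2) B) \<le> card (twin_letters k1 A1 B) + card (twin_letters k2 A2 B)"
proof -
  have "twin_letters k (A1 \<union> A2) B \<subseteq> twin_letters k1 A1 B \<union> twin_letters k2 A2 B"
    unfolding twin_letters_Un_left using twin_letters_antimono assms by (intro Un_mono)
  then show ?thesis
    by (meson card_Un_le card_mono finite_UnI finite_twin_letters le_trans)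
qed

lemma card_twin_letters_Un_right_le:
  assumes "k1 \<le> k" and "k2 \<le> k"
  shows "card (twin_letters k A (B1 \<union> B2)) \<le> card (twin_letters k1 A B1) + card (twin_letters k2 A B2)"
proof -
  have "twin_letters k A (B1 \<union> B2) \<subseteq> twin_letters k1 A B1 \<union> twin_letters k2 A B2"
    unfolding twin_letters_Un_right using twin_letters_antimono assms by (intro Un_mono)
  then show ?thesis
    by (meson card_Un_le card_mono finite_UnI finite_twin_letters le_trans)
qed

lemma twin_letters_atomic:
  assumes "\<forall>\<sigma>\<in>A. holds0 \<alpha> \<sigma>" and "\<forall>\<sigma>\<in>B. \<not> holds0 \<alpha> \<sigma>"
  shows "twin_letters 1 A B = {}"
proof -
  have "holds0 \<alpha> a = holds0 \<alpha> b" if "twins 1 x a b" for x a b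
    using twins_hd[OF that] by (cases \<alpha>) auto
  with assms show ?thesis
    unfolding twin_letters_def by blast
qed

lemma twin_letters_next:
  "1 \<le> k \<Longrightarrow> twin_letters (Suc k) A B \<subseteq> twin_letters k (nexts A) (nexts B)"
  unfolding twin_letters_def using twins_next nextsI by blast

lemma twin_letters_globally:
  assumes "\<forall>\<sigma>\<in>B. f \<sigma> < length \<sigma>" and "suffixes A \<inter> future_set f B = {}" and "k \<le> alpha n"
  shows "twin_letters (Suc k) A B \<subseteq> twin_letters k (suffixes A) (future_set f B)"
proof
  fix x
  assume "x \<in> twin_letters (Suc k) A B"
  then obtain a b where ab: "a \<in> A" "b \<in> B" "twins (Suc k) x a b"
    unfolding twin_letters_def by blast
  have fb: "drop (f b) b \<in> future_set f B"
    using ab(2) by (rule future_setI)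
  from twins_globally_cases[OF ab(3) _ assms(3)] assms(1) ab(2)
  consider "f b < length a" "twins k x (drop (f b) a) (drop (f b) b)"
    | y' where "y' < length a" "drop (f b) b = drop y' a"
    by blast
  then show "x \<in> twin_letters k (suffixes A) (future_set f B)"
  proof cases
    case 1
    then show ?thesis
      using suffixesI[OF ab(1)] fb unfolding twin_letters_def by blast
  next
    case 2
    then have "drop (f b) b \<in> suffixes A"
      using suffixesI[OF ab(1)] by simp
    with fb assms(2) show ?thesis by blast
  qed
qed

lemma twin_letter_escapes_future:
  assumes "\<forall>\<sigma>\<in>A. f \<sigma> < length \<sigma>" and "1 \<le> k" and "k \<le> alpha n"
    and lost: "x \<in> twin_letters (Suc k) A B - twin_letters k (future_set f A) (suffixes B)"
  obtains e where "e < length E" and "drop e E \<in> future_set f A" and "slot x < e + k"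
proof -
  obtain a b where ab: "a \<in> A" "b \<in> B" "twins (Suc k) x a b"
    using lost unfolding twin_letters_def by blast
  have fa: "drop (f a) a \<in> future_set f A"
    using ab(1) by (rule future_setI)
  from twins_future_cases[OF ab(3) _ assms(2,3)] assms(1) ab(1)
  consider "f a < length b" "twins k x (drop (f a) a) (drop (f a) b)"
    | e where "e < length E" "drop (f a) a = drop e E" "slot x < e + k"
    by blast
  then show ?thesis
  proof cases
    case 1
    then have "x \<in> twin_letters k (future_set f A) (suffixes B)"
      using fa suffixesI[OF ab(2)] unfolding twin_letters_def by blast
    with lost show ?thesis by blast
  next
    case 2
    with fa that show ?thesis by auto
  qed
qed

text \<open>A future point that jumps past the horizon of \<open>x\<close> lands in the tail of \<open>Enum\<close> behind \<open>x\<close>,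
  which is a suffix of the \<open>B\<close>-side of every twin pair of an earlier letter.\<close>

lemma slot_le_twin_letter_if_escaped:
  assumes "future_set f A \<inter> suffixes B = {}" and "k \<le> alpha n" and "x \<in> TQ n"
    and e: "e < length E" "drop e E \<in> future_set f A" "slot x < e + k"
    and "x' \<in> twin_letters (Suc k) A B"
  shows "slot x \<le> slot x'"
proof (rule ccontr)
  assume "\<not> slot x \<le> slot x'"
  obtain a' b' where "b' \<in> B" and twin': "twins (Suc k) x' a' b'"
    using assms(7) unfolding twin_letters_def by blast
  have "x' \<in> TQ n"
    using assms(7) twin_letters_subset_TQ by blast
  with assms(3) \<open>\<not> slot x \<le> slot x'\<close> have "slot x' + alpha n < slot x"
    using slot_gap by simp
  with e(3) assms(2) have "slot x' < e" "slot x' + alpha n < e + Suc k"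
    by linarith+
  then obtain z where "z < length b'" "drop e E = drop z b'"
    using Enum_suffix_of_twin[OF twin' _ _ e(1)] by blast
  then have "drop e E \<in> suffixes B"
    using suffixesI[OF \<open>b' \<in> B\<close>] by simp
  with e(2) assms(1) show False by blast
qed

lemma card_twin_letters_future:
  assumes "\<forall>\<sigma>\<in>A. f \<sigma> < length \<sigma>" and "future_set f A \<inter> suffixes B = {}"
    and "1 \<le> k" and "k \<le> alpha n"
  shows "card (twin_letters (Suc k) A B) \<le> Suc (card (twin_letters k (future_set f A) (suffixes B)))"
proof -
  let ?X = "twin_letters (Suc k) A B" and ?Y = "twin_letters k (future_set f A) (suffixes B)"
  have "slot x \<le> slot x'" if "x \<in> ?X - ?Y" and "x' \<in> ?X" for x x'
  proof -
    obtain e where "e < length E" "drop e E \<in> future_set f A" "slot x < e + k"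
      using twin_letter_escapes_future[OF assms(1,3,4) \<open>x \<in> ?X - ?Y\<close>] .
    moreover have "x \<in> TQ n"
      using \<open>x \<in> ?X - ?Y\<close> twin_letters_subset_TQ by blast
    ultimately show ?thesis
      using slot_le_twin_letter_if_escaped[OF assms(2,4)] \<open>x' \<in> ?X\<close> by blast
  qed
  then have "x = x'" if "x \<in> ?X - ?Y" and "x' \<in> ?X - ?Y" for x x'
    using that twin_letters_subset_TQ slot_inj by (metis DiffD1 le_antisym subsetD)
  then have "card (?X - ?Y) \<le> 1"
    by (simp add: card_le_Suc0_iff_eq finite_twin_letters)
  moreover have "card ?X \<le> card (?Y \<union> (?X - ?Y))"
    by (intro card_mono) (auto simp: finite_twin_letters)
  moreover have "card (?Y \<union> (?X - ?Y)) \<le> card ?Y + card (?X - ?Y)"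
    by (rule card_Un_le)
  ultimately show ?thesis by simp
qed

theorem card_twin_letters_less:
  "ded n A B k \<Longrightarrow> finite A \<Longrightarrow> finite B \<Longrightarrow> k \<le> alpha n \<Longrightarrow> card (twin_letters k A B) < k"
proof (induction rule: ded.induct)
  case (Atomic \<alpha> A B)
  then show ?case
    using twin_letters_atomic by simp
next
  case (Or A1 B k1 A2 k2)
  then have "card (twin_letters k1 A1 B) < k1" "card (twin_letters k2 A2 B) < k2"
    by simp_all
  with card_twin_letters_Un_left_le[of k1 "k1 + k2 + 1" k2 A1 A2 B] show ?case
    by simp
next
  case (And A B1 k1 B2 k2)
  then have "card (twin_letters k1 A B1) < k1" "card (twin_letters k2 A B2) < k2"
    by simp_all
  with card_twin_letters_Un_right_le[of k1 "k1 + k2 + 1" k2 A B1 B2] show ?case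
    by simp
next
  case (Next A B k)
  then have "card (twin_letters k (nexts A) (nexts B)) < k"
    by (simp add: finite_nexts)
  with card_mono[OF finite_twin_letters twin_letters_next[OF ded_size_pos[OF Next.hyps(1)], of A B]]
  show ?case by simp
next
  case (WeakNext A B k)
  then have "card (twin_letters k (nexts A) (nexts B)) < k"
    by (simp add: finite_nexts)
  with card_mono[OF finite_twin_letters twin_letters_next[OF ded_size_pos[OF WeakNext.hyps(1)], of A B]]
  show ?case by simp
next
  case (Future A f B k)
  then have "future_set f A \<inter> suffixes B = {}" and "card (twin_letters k (future_set f A) (suffixes B)) < k"
    by (simp_all add: ded_disjoint finite_future_set finite_suffixes)
  with Future.hyps(1) Future.prems(3) ded_size_pos[OF Future.hyps(2)] show ?case
    using card_twin_letters_future[of A f B k] by simp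
next
  case (Globally B f A k)
  then have "suffixes A \<inter> future_set f B = {}" and "card (twin_letters k (suffixes A) (future_set f B)) < k"
    by (simp_all add: ded_disjoint finite_future_set finite_suffixes)
  with Globally.hyps(1) Globally.prems(3)
    card_mono[OF finite_twin_letters twin_letters_globally[of B f A k]] show ?case
    by simp
qed

section \<open>Suffixes of \<A>-traces\<close>

definition enum_shaped :: "trace \<Rightarrow> bool" where
  "enum_shaped s \<longleftrightarrow> (\<exists>u \<beta>. Pt \<in> \<beta> \<and> s = replicate u {} @ \<beta> # E) \<or> (\<exists>e<length E. s = drop e E)"

lemma enum_shaped_drop:
  assumes "enum_shaped s" and "d < length s"
  shows "enum_shaped (drop d s)"
proof -
  consider u \<beta> where "Pt \<in> \<beta>" "s = replicate u {} @ \<beta> # E" | e where "e < length E" "s = drop e E"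
    using assms(1) unfolding enum_shaped_def by blast
  then show ?thesis
  proof cases
    case (1 u \<beta>)
    then show ?thesis
    proof (cases "d \<le> u")
      case True
      with 1 show ?thesis
        unfolding enum_shaped_def by (intro disjI1 exI[of _ "u - d"] exI[of _ \<beta>]) simp
    next
      case False
      with 1 assms(2) show ?thesis
        unfolding enum_shaped_def by (intro disjI2 exI[of _ "d - Suc u"]) (simp add: drop_Cons')
    qed
  next
    case (2 e)
    with assms(2) show ?thesis
      unfolding enum_shaped_def by (intro disjI2 exI[of _ "d + e"]) simp
  qed
qed

lemma enum_shaped_suffixes_Acal:
  assumes "s \<in> suffixes (Acal n lt)"
  shows "enum_shaped s"
proof -
  obtain \<sigma> d where "s = drop d \<sigma>" "d < length \<sigma>" "\<sigma> \<in> Acal n lt"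
    using assms unfolding suffixes_def by blast
  moreover have "enum_shaped \<sigma>" if "\<sigma> \<in> Acal n lt" for \<sigma>
    using that Pt_in_bar unfolding Acal_def enum_shaped_def by fastforce
  ultimately show ?thesis
    using enum_shaped_drop by blast
qed

lemma enum_shaped_enum_trace: "c < length (enum_trace j x) \<Longrightarrow> enum_shaped (drop c (enum_trace j x))"
  by (rule enum_shaped_drop) (auto simp: enum_shaped_def enum_trace_def Pt_in_bar)

lemma enum_shaped_determined:
  assumes "enum_shaped s" and s: "s = replicate u {} @ \<rho> # v" and "\<rho> \<noteq> {}"
  shows "s = (if Pt \<in> \<rho> then replicate u {} @ \<rho> # E else drop (slot \<rho> - u) E)"
  using assms(1) unfolding enum_shaped_def
proof (elim disjE exE conjE)
  fix u' \<beta>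
  assume "Pt \<in> \<beta>" and s': "s = replicate u' {} @ \<beta> # E"
  then have "u' = u \<and> \<beta> = \<rho>"
    using replicate_append_Cons_inject[of u' "{}" \<beta> E u \<rho> v] s assms(3) by auto
  with \<open>Pt \<in> \<beta>\<close> s' show ?thesis by simp
next
  fix e
  assume "e < length E" and s': "s = drop e E"
  have "u < length (drop e E)" and "drop e E ! u = \<rho>"
    using s s' by (simp_all add: nth_append)
  then have "e + u < length E" and "E ! (e + u) = \<rho>"
    using \<open>e < length E\<close> by simp_all
  then have "\<rho> \<in> TQ n" and "slot \<rho> = e + u"
    using slot_nth_Enum assms(3) by metis+
  with s' show ?thesis
    using Pt_notin_TQ by simp
qed

lemma approx_gap_trace:
  assumes x: "x \<in> TQ n" and c: "c < length (gap_trace j x)" and s: "enum_shaped s"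
    and "approx n s (drop c (gap_trace j x))"
  shows "s = drop c (gap_trace j x) \<or> s = drop c (enum_trace j x) \<and> c + alpha n < divergence j x"
proof -
  obtain u \<rho> v w where "\<rho> \<in> TQ n \<union> TP n" and sv: "s = replicate u {} @ [\<rho>] @ v"
    and bw: "drop c (gap_trace j x) = replicate u {} @ [\<rho>] @ w"
    using assms(4) unfolding approx_def by blast
  then have \<rho>: "\<rho> \<noteq> {}" and sv: "s = replicate u {} @ \<rho> # v"
    and bw: "drop c (gap_trace j x) = replicate u {} @ \<rho> # w"
    using TQ_TP_nonempty by simp_all
  let ?canonical = "if Pt \<in> \<rho> then replicate u {} @ \<rho> # E else drop (slot \<rho> - u) E"
  have s_eq: "s = ?canonical"
    using enum_shaped_determined[OF s sv \<rho>] .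
  obtain U R where enum: "enum_trace j x = U @ replicate (alpha n) {} @ x # replicate (alpha n) {} @ R"
    and gap: "gap_trace j x = U @ replicate (alpha n) {} @ R"
    and R: "replicate (alpha n) {} @ R = drop (Suc (slot x)) E"
    and div: "divergence j x = length U + alpha n" and U: "U \<noteq> []" "last U \<noteq> {}"
    using trace_split[OF x] by blast
  show ?thesis
  proof (cases "length U \<le> c")
    case True
    then have "drop c (gap_trace j x) = drop (c - length U + Suc (slot x)) E"
      unfolding gap by (simp add: R)
    moreover have "drop c (gap_trace j x) \<noteq> []"
      using c by simp
    ultimately have "enum_shaped (drop c (gap_trace j x))"
      unfolding enum_shaped_def by (metis drop_eq_Nil not_le)
    then have "drop c (gap_trace j x) = ?canonical"
      using enum_shaped_determined[OF _ bw \<rho>] by blast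
    with s_eq show ?thesis by simp
  next
    case False
    have "last U \<in> set (drop c U)"
      using False last_in_set[of "drop c U"] by simp
    moreover have "drop c U @ replicate (alpha n) {} @ R = replicate u {} @ \<rho> # w"
      using False bw unfolding gap by simp
    ultimately have "drop c U = replicate u {} @ \<rho> # drop (Suc u) (drop c U)"
      using U(2) by (intro append_eq_replicate_ConsD)
    then obtain Z where Z: "drop c U = replicate u {} @ \<rho> # Z"
      by blast
    have "drop c (enum_trace j x) = drop c U @ replicate (alpha n) {} @ x # replicate (alpha n) {} @ R"
      using False unfolding enum by simp
    then have dc: "drop c (enum_trace j x) = replicate u {} @ \<rho> # Z @ replicate (alpha n) {} @ x # replicate (alpha n) {} @ R"
      unfolding Z by simp
    have "c < length (enum_trace j x)"
      using c unfolding enum gap by simp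
    then have "drop c (enum_trace j x) = ?canonical"
      using enum_shaped_determined[OF enum_shaped_enum_trace dc \<rho>] by blast
    with s_eq False div show ?thesis by simp
  qed
qed

lemma card_approx_pairs_le:
  fixes \<tau> :: "nat \<Rightarrow> letter" and r t :: "nat \<Rightarrow> nat"
  defines "b \<equiv> \<lambda>i. drop (r i) (gap_trace (t i) (\<tau> i))"
  assumes "finite I" and "inj_on \<tau> I" and "\<forall>i\<in>I. \<tau> i \<in> TQ n"
    and "\<forall>i\<in>I. r i < length (gap_trace (t i) (\<tau> i))"
    and "A \<subseteq> suffixes (Acal n lt)" and "A \<inter> b ` I = {}" and "k \<le> alpha n"
  shows "card {(s, s'). s \<in> A \<and> s' \<in> b ` I \<and> approx n s s'} \<le> card (twin_letters k A (b ` I))"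
proof -
  let ?C = "{(s, s'). s \<in> A \<and> s' \<in> b ` I \<and> approx n s s'}"
  define a where "a i = drop (r i) (enum_trace (t i) (\<tau> i))" for i
  define J where "J = {i \<in> I. (a i, b i) \<in> ?C \<and> r i + alpha n < divergence (t i) (\<tau> i)}"
  have "?C \<subseteq> (\<lambda>i. (a i, b i)) ` J"
  proof
    fix p
    assume "p \<in> ?C"
    then obtain s i where p: "p = (s, b i)" "s \<in> A" "i \<in> I" "approx n s (b i)"
      by blast
    have "enum_shaped s"
      using assms(6) p(2) by (blast intro: enum_shaped_suffixes_Acal)
    with assms(4,5) p(3,4) have "s = b i \<or> s = a i \<and> r i + alpha n < divergence (t i) (\<tau> i)"
      using approx_gap_trace unfolding a_def b_def by blast
    with p assms(7) \<open>p \<in> ?C\<close> show "p \<in> (\<lambda>i. (a i, b i)) ` J"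
      unfolding J_def by blast
  qed
  moreover have "finite J"
    using assms(2) unfolding J_def by simp
  ultimately have "card ?C \<le> card J"
    by (meson card_image_le card_mono finite_imageI le_trans)
  also have "\<dots> = card (\<tau> ` J)"
    using inj_on_subset[OF assms(3)] unfolding J_def by (simp add: card_image)
  also have "\<dots> \<le> card (twin_letters k A (b ` I))"
  proof (intro card_mono finite_twin_letters image_subsetI)
    fix i
    assume "i \<in> J"
    then have i: "i \<in> I" "(a i, b i) \<in> ?C" "r i + alpha n < divergence (t i) (\<tau> i)"
      unfolding J_def by auto
    with assms(4,8) have "twins k (\<tau> i) (a i) (b i)"
      unfolding twins_def a_def b_def by (intro conjI exI[of _ "t i"] exI[of _ "r i"]) auto
    with i(2) show "\<tau> i \<in> twin_letters k A (b ` I)"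
      unfolding twin_letters_def by blast
  qed
  finally show ?thesis .
qed

end

theorem lemma4:
  fixes n m :: nat and lt :: "(letter \<times> letter) set"
    and r t :: "nat \<Rightarrow> nat" and \<tau> :: "nat \<Rightarrow> letter"
    and A :: "trace set"
  assumes "n \<ge> 1"
    and "strict_linear_order_on (TQ n) lt"
    and "\<forall>i\<in>{1..m}. \<tau> i \<in> TQ n"
    and "inj_on \<tau> {1..m}"
    and "\<forall>i\<in>{1..m}. r i < length (replicate (t i) {} @ [bar (\<tau> i)] @ Enum_minus n lt (\<tau> i))"
    and "finite A"
    and "A \<subseteq> suffixes (Acal n lt)"
  shows "\<forall>B C k. B = {drop (r i) (replicate (t i) {} @ [bar (\<tau> i)] @ Enum_minus n lt (\<tau> i)) | i. i \<in> {1..m}}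
            \<longrightarrow> C = {(a, b). a \<in> A \<and> b \<in> B \<and> approx n a b}
            \<longrightarrow> ded n A B k \<longrightarrow> card C + 1 \<le> k"
proof (intro allI impI)
  fix B C k
  assume B: "B = {drop (r i) (replicate (t i) {} @ [bar (\<tau> i)] @ Enum_minus n lt (\<tau> i)) | i. i \<in> {1..m}}"
    and C: "C = {(a, b). a \<in> A \<and> b \<in> B \<and> approx n a b}" and ded: "ded n A B k"
  interpret enumeration n lt
    by standard (fact assms(2))
  have B_eq: "B = (\<lambda>i. drop (r i) (gap_trace (t i) (\<tau> i))) ` {1..m}"
    unfolding B gap_trace_def by auto
  then have "finite B" by simp
  with ded assms(6) have "A \<inter> B = {}"
    by (rule ded_disjoint)
  moreover have "\<forall>i\<in>{1..m}. r i < length (gap_trace (t i) (\<tau> i))"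
    using assms(5) unfolding gap_trace_def by simp
  ultimately have card_C: "card C \<le> card (twin_letters (min k (alpha n)) A B)"
    using card_approx_pairs_le[of "{1..m}"] assms(3,4,7) unfolding C B_eq by simp
  show "card C + 1 \<le> k"
  proof (cases "k \<le> alpha n")
    case True
    with card_C card_twin_letters_less[OF ded assms(6) \<open>finite B\<close> True] show ?thesis
      by simp
  next
    case False
    have "card (twin_letters (alpha n) A B) \<le> card (TQ n)"
      by (intro card_mono finite_TQ twin_letters_subset_TQ)
    with card_C False card_TQ_le[of n] two_pow_less_alpha[of n] show ?thesis
      by simp
  qed
qed

end
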